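(* Let $(V,\|\cdot\|)$ be a normed plane and $x,y\in V$ distinct. The segment $[xy]$ is not parallel to any nondegenerate segment contained in the unit circle $S$ if and only if for every $z\in\mathrm{bis}(x,y)\setminus[xy]$, the bisector $\mathrm{bis}(x,y)$ is contained in $C_z\cup(2z-C_z)$, where $C_z=\mathrm{conv}\big([zx\rangle\cup[zy\rangle\big)$ and $2z-C_z=\{2z-v:v\in C_z\}$ is the image of $C_z$ under the point reflection through $z$.
   Context: A normed (Minkowski) plane $(V,\|\cdot\|)$ is a two-dimensional real vector space with a norm; $S=\{v:\|v\|=1\}$ is its unit circle. For $x,y\in V$, $[xy]$ denotes the closed segment and $[xy\rangle$ the closed half-line starting at $x$ and passing through $y$. For distinct $x,y\in V$ the bisector is $\mathrm{bis}(x,y)=\{z\in V:\|z-x\|=\|z-y\|\}$. *)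

theory Defs
  imports "HOL-Analysis.Analysis"
begin

definition halfline :: "'a::real_vector \<Rightarrow> 'a \<Rightarrow> 'a set" where
  "halfline x y = {x + t *\<^sub>R (y - x) | t. t \<ge> 0}"

definition bis :: "'a::real_normed_vector \<Rightarrow> 'a \<Rightarrow> 'a set" where
  "bis x y = {z. norm (z - x) = norm (z - y)}"

definition unit_circle :: "'a::real_normed_vector set" where
  "unit_circle = {v. norm v = 1}"

definition cone_at :: "'a::real_vector \<Rightarrow> 'a \<Rightarrow> 'a \<Rightarrow> 'a set" where
  "cone_at z x y = convex hull (halfline z x \<union> halfline z y)"

definition seg_parallel :: "'a::real_vector \<Rightarrow> 'a \<Rightarrow> 'a \<Rightarrow> 'a \<Rightarrow> bool" where
  "seg_parallel a b c d \<longleftrightarrow> (\<exists>t. b - a = t *\<^sub>R (d - c))"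

end

theory Submission
  imports Defs
begin

text \<open>For \<open>z \<in> bis x y - [xy]\<close> the vectors \<open>x - z\<close>, \<open>y - z\<close> form a basis of the plane, and a point
lies in \<open>C\<^sub>z \<union> (2z - C\<^sub>z)\<close> exactly when its two coordinates have the same sign. If some
\<open>v \<in> bis x y\<close> has coordinates of opposite signs, the convex function
\<open>\<lambda> \<mapsto> \<parallel>v - x + \<lambda>(y - x)\<parallel>\<close> takes equal values at \<open>-1\<close> and \<open>0\<close> and does not increase on some
later unit interval, so it is constant on \<open>[-1, 0]\<close>: the segment from \<open>v - y\<close> to \<open>v - x\<close>
lies on a sphere, and rescaled it is a chord of \<open>S\<close> parallel to \<open>[xy]\<close>. Conversely, from a
chord \<open>p(l) = (1 - l)a + lb\<close> of \<open>S\<close> with \<open>y - x = t(b - a)\<close>, \<open>t > 0\<close>, the points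
\<open>z = x + 2t p(3/4)\<close> and \<open>v = x + 2t p(1)\<close> lie on the bisector, \<open>z \<notin> [xy]\<close>, and \<open>v\<close> has
coordinates \<open>(-1/2, 1/2)\<close> with respect to \<open>z\<close>.\<close>

lemma convex_on_chord_bound:
  fixes g :: "real \<Rightarrow> real"
  assumes "convex_on UNIV g" "p \<le> q" "q \<le> r" "p < r"
  shows "(r - p) * g q \<le> (r - q) * g p + (q - p) * g r"
proof -
  have "convex_on {p..r} g"
    using convex_on_subset[OF assms(1)] by simp
  then have "g q \<le> (g r - g p) / (r - p) * (q - p) + g p"
    using convex_onD_Icc' assms(2,3) by fastforce
  then show ?thesis
    using assms(4) by (simp add: divide_simps algebra_simps)
qed

lemma convex_on_constant_between:
  fixes g :: "real \<Rightarrow> real"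
  assumes g: "convex_on UNIV g" and level: "g (-1) = g 0"
    and t: "0 < t" and decrease: "g t \<le> g (t - 1)"
    and s: "-1 \<le> s" "s \<le> 0"
  shows "g s = g 0"
proof -
  have "(t + 1) * g 0 \<le> t * g (-1) + g t"
    using convex_on_chord_bound[OF g, of "-1" 0 t] t by simp
  then have "g 0 \<le> g t"
    using level by (simp add: algebra_simps)
  moreover have "(t + 1) * g (t - 1) \<le> g (-1) + t * g t"
    using convex_on_chord_bound[OF g, of "-1" "t - 1" t] t by simp
  moreover have "t * g t \<le> t * g (t - 1)"
    using decrease t by simp
  ultimately have gt: "g t = g 0"
    using level decrease by (simp add: algebra_simps)
  have "g s \<le> (- s) * g (-1) + (s + 1) * g 0"
    using convex_on_chord_bound[OF g, of "-1" s 0] s by simp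
  then have "g s \<le> g 0"
    using level by (simp add: algebra_simps)
  moreover have "(t - s) * g 0 \<le> t * g s + (- s) * g t"
    using convex_on_chord_bound[OF g, of s 0 t] s t by simp
  then have "t * g 0 \<le> t * g s"
    using gt by (simp add: algebra_simps)
  then have "g 0 \<le> g s"
    using t by simp
  ultimately show ?thesis
    by simp
qed

lemma convex_on_norm_along_line:
  fixes a d :: "'a::real_normed_vector"
  shows "convex_on UNIV (\<lambda>r. norm (a + r *\<^sub>R d))"
proof (rule convex_onI)
  fix u p q :: real
  assume u: "0 < u" "u < 1"
  have "a + ((1 - u) *\<^sub>R p + u *\<^sub>R q) *\<^sub>R d = (1 - u) *\<^sub>R (a + p *\<^sub>R d) + u *\<^sub>R (a + q *\<^sub>R d)"
    by (simp add: algebra_simps)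
  also have "norm \<dots> \<le> (1 - u) * norm (a + p *\<^sub>R d) + u * norm (a + q *\<^sub>R d)"
    using u by (metis (no_types) norm_triangle_le norm_scaleR abs_of_pos diff_gt_0_iff_gt order_refl)
  finally show "norm (a + ((1 - u) *\<^sub>R p + u *\<^sub>R q) *\<^sub>R d)
      \<le> (1 - u) * norm (a + p *\<^sub>R d) + u * norm (a + q *\<^sub>R d)" .
qed simp

lemma unit_chord_of_norm_level:
  fixes a d :: "'a::real_normed_vector"
  assumes "d \<noteq> 0" and "0 < t" and level: "norm a = norm (a - d)"
    and decrease: "norm (a + t *\<^sub>R d) \<le> norm (a + (t - 1) *\<^sub>R d)"
  shows "\<exists>p q. p \<noteq> q \<and> closed_segment p q \<subseteq> unit_circle \<and> (\<exists>\<tau>. d = \<tau> *\<^sub>R (q - p))"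
proof -
  define c where "c = norm a"
  have flat: "norm (a - s *\<^sub>R d) = c" if "0 \<le> s" "s \<le> 1" for s
    using convex_on_constant_between[OF convex_on_norm_along_line, of a d t "- s"] assms that
    by (simp add: c_def)
  have "c > 0"
    using level \<open>d \<noteq> 0\<close> by (auto simp: c_def)
  define p where "p = (1 / c) *\<^sub>R (a - d)"
  define q where "q = (1 / c) *\<^sub>R a"
  have "closed_segment p q \<subseteq> unit_circle"
  proof
    fix w assume "w \<in> closed_segment p q"
    then obtain u where u: "0 \<le> u" "u \<le> 1" "w = (1 - u) *\<^sub>R p + u *\<^sub>R q"
      unfolding closed_segment_def by auto
    have "w = (1 / c) *\<^sub>R ((1 - u) *\<^sub>R (a - d) + u *\<^sub>R a)"
      using u(3) by (simp add: p_def q_def scaleR_right_distrib)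
    also have "(1 - u) *\<^sub>R (a - d) + u *\<^sub>R a = a - (1 - u) *\<^sub>R d"
      by (simp add: algebra_simps)
    finally have "w = (1 / c) *\<^sub>R (a - (1 - u) *\<^sub>R d)" .
    then show "w \<in> unit_circle"
      using flat[of "1 - u"] u \<open>c > 0\<close> by (simp add: unit_circle_def)
  qed
  moreover have "p \<noteq> q" and "d = c *\<^sub>R (q - p)"
    using \<open>d \<noteq> 0\<close> \<open>c > 0\<close> by (auto simp: p_def q_def algebra_simps)
  ultimately show ?thesis
    by blast
qed

lemma bisector_on_line_midpoint:
  fixes x y :: "'a::real_normed_vector"
  assumes "x \<noteq> y" and "norm (z - x) = norm (z - y)" and z: "z = (1 - s) *\<^sub>R x + s *\<^sub>R y"
  shows "s = 1 / 2"
proof -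
  have "z - x = s *\<^sub>R (y - x)" and "z - y = (1 - s) *\<^sub>R (x - y)"
    using z by (simp_all add: algebra_simps)
  then have "\<bar>s\<bar> * norm (y - x) = \<bar>1 - s\<bar> * norm (y - x)"
    using assms(2) by (simp add: norm_minus_commute)
  then have "\<bar>s\<bar> = \<bar>1 - s\<bar>"
    using \<open>x \<noteq> y\<close> by simp
  then show ?thesis
    by auto
qed

lemma bisector_coordinates_unique:
  fixes x y z :: "'a::real_normed_vector"
  assumes "x \<noteq> y" and "z \<in> bis x y - closed_segment x y"
    and "a *\<^sub>R (x - z) + b *\<^sub>R (y - z) = 0"
  shows "a = 0 \<and> b = 0"
proof (cases "a + b = 0")
  case True
  then have "a *\<^sub>R (x - y) = 0"
    using assms(3) by (simp add: algebra_simps eq_neg_iff_add_eq_0 [symmetric])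
  then show ?thesis
    using \<open>x \<noteq> y\<close> True by simp
next
  case False
  define s where "s = b / (a + b)"
  have "z = (1 - s) *\<^sub>R x + s *\<^sub>R y"
  proof -
    have combination: "(a + b) *\<^sub>R z = a *\<^sub>R x + b *\<^sub>R y"
      using assms(3) by (simp add: algebra_simps)
    have "z = (1 / (a + b)) *\<^sub>R (a *\<^sub>R x + b *\<^sub>R y)"
      using False by (simp flip: combination)
    then have "z = (a / (a + b)) *\<^sub>R x + s *\<^sub>R y"
      by (simp add: s_def scaleR_right_distrib)
    moreover have "a / (a + b) = 1 - s"
      using False by (simp add: s_def field_simps)
    ultimately show ?thesis
      by simp
  qed
  moreover have "norm (z - x) = norm (z - y)"
    using assms(2) by (simp add: bis_def)
  ultimately have "s = 1 / 2"
    using bisector_on_line_midpoint \<open>x \<noteq> y\<close> by blast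
  then have "z \<in> closed_segment x y"
    using \<open>z = (1 - s) *\<^sub>R x + s *\<^sub>R y\<close> by (auto simp: closed_segment_def)
  with assms(2) show ?thesis
    by simp
qed

lemma dim_2_coordinates:
  fixes u w :: "'a::real_vector"
  assumes "dim (UNIV :: 'a set) = 2"
    and unique: "\<And>a b. a *\<^sub>R u + b *\<^sub>R w = 0 \<Longrightarrow> a = 0 \<and> b = 0"
  shows "\<exists>k j. v = k *\<^sub>R u + j *\<^sub>R w"
proof -
  have "u \<noteq> w" and "w \<noteq> 0"
    using unique[of 1 "-1"] unique[of 0 1] by auto
  have "u \<notin> span {w}"
  proof
    assume "u \<in> span {w}"
    then obtain k where "u = k *\<^sub>R w"
      by (auto simp: span_singleton)
    then show False
      using unique[of 1 "- k"] by simp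
  qed
  then have independent: "independent {u, w}"
    using \<open>w \<noteq> 0\<close> by (simp add: independent_insert)
  have "v \<in> span {u, w}"
  proof (rule ccontr)
    assume "v \<notin> span {u, w}"
    then have "independent {v, u, w}" and "v \<notin> {u, w}"
      using independent span_base[of v "{u, w}"] by (auto simp: independent_insert)
    moreover from \<open>v \<notin> {u, w}\<close> have "card {v, u, w} = 3"
      using \<open>u \<noteq> w\<close> by simp
    moreover obtain B :: "'a set" where "UNIV \<subseteq> span B" "card B = 2"
      using basis_exists[of "UNIV :: 'a set"] assms(1) by metis
    ultimately have "3 \<le> (2::nat)"
      using independent_span_bound[of B "{v, u, w}"] card.infinite by fastforce
    then show False
      by simp
  qed
  then obtain k where "v - k *\<^sub>R u \<in> span {w}"
    by (auto simp: span_breakdown_eq)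
  then obtain j where "v - k *\<^sub>R u = j *\<^sub>R w"
    by (auto simp: span_singleton)
  then show ?thesis
    by (metis diff_eq_eq add.commute)
qed

lemma cone_at_eq:
  fixes x y z :: "'a::real_vector"
  shows "cone_at z x y = {z + \<alpha> *\<^sub>R (x - z) + \<beta> *\<^sub>R (y - z) | \<alpha> \<beta>. 0 \<le> \<alpha> \<and> 0 \<le> \<beta>}"
    (is "_ = ?K")
proof
  have "convex ?K"
  proof (rule convexI)
    fix p q :: 'a and u v :: real
    assume "p \<in> ?K" "q \<in> ?K" and uv: "0 \<le> u" "0 \<le> v" "u + v = 1"
    then obtain a1 b1 a2 b2 where coeffs: "0 \<le> a1" "0 \<le> b1" "0 \<le> a2" "0 \<le> b2"
      and p: "p = z + a1 *\<^sub>R (x - z) + b1 *\<^sub>R (y - z)"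
      and q: "q = z + a2 *\<^sub>R (x - z) + b2 *\<^sub>R (y - z)"
      by blast
    have "u *\<^sub>R p + v *\<^sub>R q
        = (u + v) *\<^sub>R z + (u * a1 + v * a2) *\<^sub>R (x - z) + (u * b1 + v * b2) *\<^sub>R (y - z)"
      unfolding p q by (simp add: algebra_simps)
    then have "u *\<^sub>R p + v *\<^sub>R q
        = z + (u * a1 + v * a2) *\<^sub>R (x - z) + (u * b1 + v * b2) *\<^sub>R (y - z)"
      using uv(3) by simp
    moreover have "0 \<le> u * a1 + v * a2" "0 \<le> u * b1 + v * b2"
      using uv coeffs by simp_all
    ultimately show "u *\<^sub>R p + v *\<^sub>R q \<in> ?K"
      by blast
  qed
  moreover have "halfline z x \<union> halfline z y \<subseteq> ?K"
    unfolding halfline_def by force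
  ultimately show "cone_at z x y \<subseteq> ?K"
    unfolding cone_at_def by (rule hull_minimal[rotated])
next
  show "?K \<subseteq> cone_at z x y"
  proof clarify
    fix \<alpha> \<beta> :: real
    assume "0 \<le> \<alpha>" "0 \<le> \<beta>"
    then have "z + (2 * \<alpha>) *\<^sub>R (x - z) \<in> cone_at z x y" "z + (2 * \<beta>) *\<^sub>R (y - z) \<in> cone_at z x y"
      unfolding cone_at_def by (auto intro!: hull_inc simp: halfline_def)
    then have "(1/2) *\<^sub>R (z + (2 * \<alpha>) *\<^sub>R (x - z)) + (1/2) *\<^sub>R (z + (2 * \<beta>) *\<^sub>R (y - z))
        \<in> cone_at z x y"
      unfolding cone_at_def by (intro convexD[OF convex_convex_hull]) simp_all
    moreover have "(1/2) *\<^sub>R (z + (2 * \<alpha>) *\<^sub>R (x - z)) + (1/2) *\<^sub>R (z + (2 * \<beta>) *\<^sub>R (y - z))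
        = z + \<alpha> *\<^sub>R (x - z) + \<beta> *\<^sub>R (y - z)"
      by (simp add: algebra_simps flip: scaleR_add_left)
    ultimately show "z + \<alpha> *\<^sub>R (x - z) + \<beta> *\<^sub>R (y - z) \<in> cone_at z x y"
      by simp
  qed
qed

lemma reflected_cone_at_eq:
  fixes x y z :: "'a::real_vector"
  shows "(\<lambda>v. 2 *\<^sub>R z - v) ` cone_at z x y
    = {z + \<alpha> *\<^sub>R (x - z) + \<beta> *\<^sub>R (y - z) | \<alpha> \<beta>. \<alpha> \<le> 0 \<and> \<beta> \<le> 0}"
proof -
  have reflect: "2 *\<^sub>R z - (z + \<alpha> *\<^sub>R (x - z) + \<beta> *\<^sub>R (y - z))
      = z + (- \<alpha>) *\<^sub>R (x - z) + (- \<beta>) *\<^sub>R (y - z)" for \<alpha> \<beta>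
    by (simp add: algebra_simps scaleR_2)
  show ?thesis
  proof (intro set_eqI iffI)
    fix v assume "v \<in> (\<lambda>v. 2 *\<^sub>R z - v) ` cone_at z x y"
    then obtain \<alpha> \<beta> where "0 \<le> \<alpha>" "0 \<le> \<beta>" "v = 2 *\<^sub>R z - (z + \<alpha> *\<^sub>R (x - z) + \<beta> *\<^sub>R (y - z))"
      unfolding cone_at_eq by blast
    moreover have "- \<alpha> \<le> 0" "- \<beta> \<le> 0"
      using \<open>0 \<le> \<alpha>\<close> \<open>0 \<le> \<beta>\<close> by simp_all
    ultimately show "v \<in> {z + \<alpha> *\<^sub>R (x - z) + \<beta> *\<^sub>R (y - z) | \<alpha> \<beta>. \<alpha> \<le> 0 \<and> \<beta> \<le> 0}"
      unfolding reflect by blast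
  next
    fix v assume "v \<in> {z + \<alpha> *\<^sub>R (x - z) + \<beta> *\<^sub>R (y - z) | \<alpha> \<beta>. \<alpha> \<le> 0 \<and> \<beta> \<le> 0}"
    then obtain \<alpha> \<beta> where "\<alpha> \<le> 0" "\<beta> \<le> 0"
      and v: "v = 2 *\<^sub>R z - (z + (- \<alpha>) *\<^sub>R (x - z) + (- \<beta>) *\<^sub>R (y - z))"
      unfolding reflect by auto
    then have "0 \<le> - \<alpha>" "0 \<le> - \<beta>"
      by simp_all
    then have "z + (- \<alpha>) *\<^sub>R (x - z) + (- \<beta>) *\<^sub>R (y - z) \<in> cone_at z x y"
      unfolding cone_at_eq by blast
    then show "v \<in> (\<lambda>v. 2 *\<^sub>R z - v) ` cone_at z x y"
      using v by (rule rev_image_eqI)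
  qed
qed

lemma mem_double_cone_iff:
  fixes x y z :: "'a::real_vector"
  assumes unique: "\<And>a b. a *\<^sub>R (x - z) + b *\<^sub>R (y - z) = 0 \<Longrightarrow> a = 0 \<and> b = 0"
  shows "z + k *\<^sub>R (x - z) + j *\<^sub>R (y - z) \<in> cone_at z x y \<union> (\<lambda>v. 2 *\<^sub>R z - v) ` cone_at z x y
    \<longleftrightarrow> 0 \<le> k * j"
proof -
  have same: "\<alpha> = k \<and> \<beta> = j"
    if "z + k *\<^sub>R (x - z) + j *\<^sub>R (y - z) = z + \<alpha> *\<^sub>R (x - z) + \<beta> *\<^sub>R (y - z)" for \<alpha> \<beta>
  proof -
    have "(k - \<alpha>) *\<^sub>R (x - z) + (j - \<beta>) *\<^sub>R (y - z) = 0"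
      using that by (simp add: algebra_simps)
    then show ?thesis
      using unique by force
  qed
  have "z + k *\<^sub>R (x - z) + j *\<^sub>R (y - z) \<in> cone_at z x y \<longleftrightarrow> 0 \<le> k \<and> 0 \<le> j"
    unfolding cone_at_eq using same by auto
  moreover have "z + k *\<^sub>R (x - z) + j *\<^sub>R (y - z) \<in> (\<lambda>v. 2 *\<^sub>R z - v) ` cone_at z x y
      \<longleftrightarrow> k \<le> 0 \<and> j \<le> 0"
    unfolding reflected_cone_at_eq using same by auto
  ultimately show ?thesis
    by (auto simp: zero_le_mult_iff)
qed

lemma bis_commute: "bis x y = bis y x"
  by (auto simp: bis_def)

lemma seg_parallel_commute: "seg_parallel y x a b \<longleftrightarrow> seg_parallel x y a b"
  unfolding seg_parallel_def by (metis minus_diff_eq scaleR_minus_left)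

lemma unit_chord_of_bisector_point:
  fixes x y z v :: "'a::real_normed_vector"
  assumes "x \<noteq> y" and "z \<in> bis x y" and "v \<in> bis x y"
    and v: "v = z + \<alpha> *\<^sub>R (x - z) + \<beta> *\<^sub>R (y - z)" and "0 < \<alpha>" "\<beta> < 0"
  shows "\<exists>a b. a \<noteq> b \<and> closed_segment a b \<subseteq> unit_circle \<and> seg_parallel x y a b"
proof -
  define e1 e2 where "e1 = x - z" and "e2 = y - z"
  define r where "r = norm e1"
  have "norm e2 = r"
    using \<open>z \<in> bis x y\<close> by (simp add: bis_def r_def e1_def e2_def norm_minus_commute)
  have level: "norm (v - x) = norm ((v - x) - (y - x))"
    using \<open>v \<in> bis x y\<close> by (simp add: bis_def)
  define s where "s = \<alpha> + \<beta>"
  \<comment> \<open>For \<open>t = -\<beta>\<close> resp. \<open>t = \<alpha>\<close> one of the two points is a multiple of \<open>e1\<close> resp. \<open>e2\<close>.\<close>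
  have "\<exists>t > 0. norm ((v - x) + t *\<^sub>R (y - x)) \<le> norm ((v - x) + (t - 1) *\<^sub>R (y - x))"
  proof (cases "0 \<le> s")
    case True
    have "(v - x) + (- \<beta>) *\<^sub>R (y - x) = (s - 1) *\<^sub>R e1"
      and "(v - x) + (- \<beta> - 1) *\<^sub>R (y - x) = s *\<^sub>R e1 - e2"
      using v by (simp_all add: e1_def e2_def s_def algebra_simps)
    moreover have "norm (s *\<^sub>R e1) - norm e2 = (s - 1) * r"
      using True \<open>norm e2 = r\<close> by (simp add: r_def algebra_simps)
    then have "norm ((s - 1) *\<^sub>R e1) = \<bar>norm (s *\<^sub>R e1) - norm e2\<bar>"
      by (simp add: r_def abs_mult)
    ultimately show ?thesis
      using \<open>\<beta> < 0\<close> norm_triangle_ineq3[of "s *\<^sub>R e1" e2] by (intro exI[of _ "- \<beta>"]) simp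
  next
    case False
    have "(v - x) + \<alpha> *\<^sub>R (y - x) = s *\<^sub>R e2 - e1"
      and "(v - x) + (\<alpha> - 1) *\<^sub>R (y - x) = (s - 1) *\<^sub>R e2"
      using v by (simp_all add: e1_def e2_def s_def algebra_simps)
    moreover have "norm (s *\<^sub>R e2) + norm e1 = (1 - s) * r"
      using False \<open>norm e2 = r\<close> by (simp add: r_def abs_if algebra_simps)
    then have "norm (s *\<^sub>R e2) + norm e1 = norm ((s - 1) *\<^sub>R e2)"
      using False \<open>norm e2 = r\<close> by (simp add: abs_if)
    ultimately show ?thesis
      using \<open>0 < \<alpha>\<close> norm_triangle_ineq4[of "s *\<^sub>R e2" e1] by (intro exI[of _ \<alpha>]) simp
  qed
  then obtain t where "0 < t"
    and "norm ((v - x) + t *\<^sub>R (y - x)) \<le> norm ((v - x) + (t - 1) *\<^sub>R (y - x))"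
    by blast
  then show ?thesis
    using unit_chord_of_norm_level[OF _ _ level] \<open>x \<noteq> y\<close> by (simp add: seg_parallel_def)
qed

lemma unit_chord_of_bisector_point_mixed_signs:
  fixes x y z v :: "'a::real_normed_vector"
  assumes "x \<noteq> y" and "z \<in> bis x y" and "v \<in> bis x y"
    and "v = z + \<alpha> *\<^sub>R (x - z) + \<beta> *\<^sub>R (y - z)" and "\<alpha> * \<beta> < 0"
  shows "\<exists>a b. a \<noteq> b \<and> closed_segment a b \<subseteq> unit_circle \<and> seg_parallel x y a b"
proof (cases "0 < \<alpha>")
  case True
  then have "\<beta> < 0"
    using \<open>\<alpha> * \<beta> < 0\<close> by (auto simp: mult_less_0_iff)
  with True show ?thesis
    using unit_chord_of_bisector_point[OF assms(1-4)] by blast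
next
  case False
  then have "0 < \<beta>" "\<alpha> < 0"
    using \<open>\<alpha> * \<beta> < 0\<close> by (auto simp: mult_less_0_iff)
  moreover have "v = z + \<beta> *\<^sub>R (y - z) + \<alpha> *\<^sub>R (x - z)"
    using assms(4) by (simp add: algebra_simps)
  ultimately show ?thesis
    using unit_chord_of_bisector_point[of y x z v \<beta> \<alpha>] assms(1-3)
    by (simp add: bis_commute seg_parallel_commute)
qed

lemma bisector_points_of_oriented_unit_chord:
  fixes x y a b :: "'a::real_normed_vector"
  assumes "x \<noteq> y" and chord: "closed_segment a b \<subseteq> unit_circle"
    and xy: "y - x = t *\<^sub>R (b - a)" and "0 < t"
  shows "\<exists>z \<in> bis x y - closed_segment x y. z + (- 1/2) *\<^sub>R (x - z) + (1/2) *\<^sub>R (y - z) \<in> bis x y"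
proof -
  have y: "y = x + t *\<^sub>R (b - a)"
    using xy by (simp add: algebra_simps)
  define P where "P l = (1 - l) *\<^sub>R a + l *\<^sub>R b" for l :: real
  have unit: "norm (P l) = 1" if "0 \<le> l" "l \<le> 1" for l
    using chord that unfolding P_def closed_segment_def unit_circle_def by blast
  have on_bis: "x + (2 * t) *\<^sub>R P l \<in> bis x y" if "1/2 \<le> l" "l \<le> 1" for l
  proof -
    have "x + (2 * t) *\<^sub>R P l - y = (2 * t) *\<^sub>R P (l - 1/2)"
      unfolding y P_def by (simp add: algebra_simps, simp flip: scaleR_add_left)
    then show ?thesis
      using unit[of l] unit[of "l - 1/2"] that \<open>0 < t\<close> by (simp add: bis_def)
  qed
  define z where "z = x + (2 * t) *\<^sub>R P (3/4)"
  have "norm (b - a) \<le> 2"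
    using norm_triangle_ineq4[of b a] unit[of 0] unit[of 1] by (simp add: P_def)
  have "z \<notin> closed_segment x y"
  proof
    assume "z \<in> closed_segment x y"
    then obtain s where z_on_line: "z = (1 - s) *\<^sub>R x + s *\<^sub>R y"
      by (auto simp: closed_segment_def)
    moreover have "norm (z - x) = norm (z - y)"
      using on_bis[of "3/4"] by (simp add: z_def bis_def)
    ultimately have "s = 1/2"
      using bisector_on_line_midpoint[OF \<open>x \<noteq> y\<close>] by blast
    moreover have "z - x = s *\<^sub>R (y - x)"
      using z_on_line by (simp add: algebra_simps)
    ultimately have "z - x = (1/2) *\<^sub>R (y - x)"
      by simp
    then have "norm ((2 * t) *\<^sub>R P (3/4)) = norm ((t / 2) *\<^sub>R (b - a))"
      by (simp add: z_def xy)
    then have "2 * t = t / 2 * norm (b - a)"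
      using unit[of "3/4"] \<open>0 < t\<close> by simp
    then show False
      using \<open>norm (b - a) \<le> 2\<close> \<open>0 < t\<close> by simp
  qed
  moreover have "z + (- 1/2) *\<^sub>R (x - z) + (1/2) *\<^sub>R (y - z) = x + (2 * t) *\<^sub>R P 1"
    unfolding y z_def P_def by (simp add: algebra_simps, simp flip: scaleR_add_left)
  moreover have "z \<in> bis x y" and "x + (2 * t) *\<^sub>R P 1 \<in> bis x y"
    using on_bis by (simp_all add: z_def)
  ultimately show ?thesis
    by (metis DiffI)
qed

lemma bisector_points_of_unit_chord:
  fixes x y a b :: "'a::real_normed_vector"
  assumes "x \<noteq> y" and chord: "closed_segment a b \<subseteq> unit_circle" and "seg_parallel x y a b"
  shows "\<exists>z \<in> bis x y - closed_segment x y. z + (- 1/2) *\<^sub>R (x - z) + (1/2) *\<^sub>R (y - z) \<in> bis x y"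
proof -
  obtain t where xy: "y - x = t *\<^sub>R (b - a)"
    using \<open>seg_parallel x y a b\<close> by (auto simp: seg_parallel_def)
  consider "0 < t" | "0 < - t"
    using xy \<open>x \<noteq> y\<close> by fastforce
  then show ?thesis
  proof cases
    case 1
    then show ?thesis
      using bisector_points_of_oriented_unit_chord[OF \<open>x \<noteq> y\<close> chord xy] by blast
  next
    case 2
    have "closed_segment b a \<subseteq> unit_circle" and "y - x = (- t) *\<^sub>R (a - b)"
      using chord xy by (simp_all add: closed_segment_commute algebra_simps)
    then show ?thesis
      using bisector_points_of_oriented_unit_chord[OF \<open>x \<noteq> y\<close>] 2 by blast
  qed
qed

theorem lemma2p1:
  fixes x y :: "'a::real_normed_vector"
  assumes "dim (UNIV :: 'a set) = 2"
    and "x \<noteq> y"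
  shows "(\<not> (\<exists>a b. a \<noteq> b \<and> closed_segment a b \<subseteq> unit_circle \<and> seg_parallel x y a b))
         \<longleftrightarrow> (\<forall>z \<in> bis x y - closed_segment x y.
               bis x y \<subseteq> cone_at z x y \<union> (\<lambda>v. 2 *\<^sub>R z - v) ` cone_at z x y)"
proof
  assume no_chord: "\<not> (\<exists>a b. a \<noteq> b \<and> closed_segment a b \<subseteq> unit_circle \<and> seg_parallel x y a b)"
  show "\<forall>z \<in> bis x y - closed_segment x y.
      bis x y \<subseteq> cone_at z x y \<union> (\<lambda>v. 2 *\<^sub>R z - v) ` cone_at z x y"
  proof (intro ballI subsetI)
    fix z v assume z: "z \<in> bis x y - closed_segment x y" and v: "v \<in> bis x y"
    note unique = bisector_coordinates_unique[OF \<open>x \<noteq> y\<close> z]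
    obtain k j where "v - z = k *\<^sub>R (x - z) + j *\<^sub>R (y - z)"
      using dim_2_coordinates[OF assms(1) unique] by blast
    then have v_eq: "v = z + k *\<^sub>R (x - z) + j *\<^sub>R (y - z)"
      by (simp add: algebra_simps)
    have "0 \<le> k * j"
      using unit_chord_of_bisector_point_mixed_signs[OF \<open>x \<noteq> y\<close> _ v v_eq] z no_chord by force
    then show "v \<in> cone_at z x y \<union> (\<lambda>v. 2 *\<^sub>R z - v) ` cone_at z x y"
      unfolding v_eq using mem_double_cone_iff[OF unique] by blast
  qed
next
  assume double_cone: "\<forall>z \<in> bis x y - closed_segment x y.
      bis x y \<subseteq> cone_at z x y \<union> (\<lambda>v. 2 *\<^sub>R z - v) ` cone_at z x y"
  show "\<not> (\<exists>a b. a \<noteq> b \<and> closed_segment a b \<subseteq> unit_circle \<and> seg_parallel x y a b)"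
  proof
    assume "\<exists>a b. a \<noteq> b \<and> closed_segment a b \<subseteq> unit_circle \<and> seg_parallel x y a b"
    then obtain z where z: "z \<in> bis x y - closed_segment x y"
      and v: "z + (- 1/2) *\<^sub>R (x - z) + (1/2) *\<^sub>R (y - z) \<in> bis x y"
      using bisector_points_of_unit_chord[OF \<open>x \<noteq> y\<close>] by blast
    have "\<not> 0 \<le> (- 1/2) * (1/2 :: real)"
      by simp
    then show False
      using double_cone z v mem_double_cone_iff[OF bisector_coordinates_unique[OF \<open>x \<noteq> y\<close> z]]
      by blast
  qed
qed

end
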